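(* The pair $(\ell_2,\ell_2^2)$ fails the uniform sBPBp.
   Context: Scalars $\mathbb{K}=\mathbb{R}$ or $\mathbb{C}$; $\ell_2^2$ is $\mathbb{K}^2$ with the Euclidean norm; $S_X$ is the unit sphere of $X$, $\mathcal{L}(X,Y)$ the bounded linear operators. A pair of Banach spaces $(X,Y)$ has the uniform strong Bishop–Phelps–Bollobás property (uniform sBPBp) if for every $\varepsilon>0$ there exists $\eta(\varepsilon)>0$ such that whenever $T\in\mathcal{L}(X,Y)$ with $\|T\|=1$ and $x_0\in S_X$ satisfy $\|T(x_0)\|>1-\eta(\varepsilon)$, there exists $x_1\in S_X$ with $\|T(x_1)\|=1$ and $\|x_1-x_0\|<\varepsilon$. *)

theory Defs
  imports "HOL-Analysis.Analysis"
begin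

(* Scalars: 'a is instantiated to real or complex. *)

definition l2 :: "(nat \<Rightarrow> 'a::real_normed_field) set" where
  "l2 = {x. summable (\<lambda>n. (norm (x n))^2)}"

definition l2norm :: "(nat \<Rightarrow> 'a::real_normed_field) \<Rightarrow> real" where
  "l2norm x = sqrt (\<Sum>n. (norm (x n))^2)"

(* ell_2^2 = K^2 with the Euclidean norm *)
definition l22norm :: "'a::real_normed_field \<times> 'a \<Rightarrow> real" where
  "l22norm p = sqrt ((norm (fst p))^2 + (norm (snd p))^2)"

(* bounded (K-)linear operators ell_2 -> ell_2^2 (only values on l2 matter) *)
definition is_bounded_op :: "((nat \<Rightarrow> 'a::real_normed_field) \<Rightarrow> 'a \<times> 'a) \<Rightarrow> bool" where
  "is_bounded_op T \<longleftrightarrow>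
     (\<forall>x\<in>l2. \<forall>y\<in>l2. T (\<lambda>n. x n + y n) = T x + T y) \<and>
     (\<forall>c. \<forall>x\<in>l2. T (\<lambda>n. c * x n) = (c * fst (T x), c * snd (T x))) \<and>
     (\<exists>C. \<forall>x\<in>l2. l22norm (T x) \<le> C * l2norm x)"

definition op_norm :: "((nat \<Rightarrow> 'a::real_normed_field) \<Rightarrow> 'a \<times> 'a) \<Rightarrow> real" where
  "op_norm T = Sup {l22norm (T x) | x. x \<in> l2 \<and> l2norm x \<le> 1}"

definition uniform_sBPBp_l2_l22 :: "'a::real_normed_field itself \<Rightarrow> bool" where
  "uniform_sBPBp_l2_l22 _ \<longleftrightarrow>
    (\<forall>\<epsilon>>0. \<exists>\<eta>>0. \<forall>(T :: (nat \<Rightarrow> 'a) \<Rightarrow> 'a \<times> 'a) x0.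
       is_bounded_op T \<and> op_norm T = 1 \<and> x0 \<in> l2 \<and> l2norm x0 = 1 \<and>
       l22norm (T x0) > 1 - \<eta> \<longrightarrow>
       (\<exists>x1\<in>l2. l2norm x1 = 1 \<and> l22norm (T x1) = 1 \<and>
                  l2norm (\<lambda>n. x1 n - x0 n) < \<epsilon>))"

end

theory Submission
  imports Defs
begin

text \<open>For \<open>0 \<le> c < 1\<close> the operator \<open>T\<^sub>c x = (x\<^sub>0, c x\<^sub>1)\<close> has norm one, attained at \<open>e\<^sub>0\<close>,
  and \<open>\<parallel>T\<^sub>c e\<^sub>1\<parallel> = c\<close> is as close to one as we like. But \<open>\<parallel>T\<^sub>c x\<parallel>\<^sup>2 = \<parallel>x\<parallel>\<^sup>2\<close> forces
  \<open>x\<^sub>1 = 0\<close> (and \<open>x\<^sub>n = 0\<close> for \<open>n \<ge> 2\<close>), so every norming point of \<open>T\<^sub>c\<close> lies at distance at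
  least \<open>\<bar>x\<^sub>1 - 1\<bar> = 1\<close> from \<open>e\<^sub>1\<close>. Hence no \<open>\<eta>\<close> works for \<open>\<epsilon> = 1\<close>.\<close>

definition unit_vec :: "nat \<Rightarrow> nat \<Rightarrow> 'a::real_normed_field" where
  "unit_vec k = (\<lambda>n. if n = k then 1 else 0)"

lemma l2norm_square:
  assumes "x \<in> l2"
  shows "l2norm x ^ 2 = (\<Sum>n. (norm (x n :: 'a::real_normed_field))^2)"
  using assms unfolding l2norm_def l2_def by (simp add: suminf_nonneg)

lemma l2norm_nonneg: "x \<in> l2 \<Longrightarrow> 0 \<le> l2norm (x :: nat \<Rightarrow> 'a::real_normed_field)"
  unfolding l2norm_def l2_def by (simp add: suminf_nonneg)

lemma unit_vec_in_l2: "(unit_vec k :: nat \<Rightarrow> 'a::real_normed_field) \<in> l2"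
  and l2norm_unit_vec: "l2norm (unit_vec k :: nat \<Rightarrow> 'a) = 1"
proof -
  have "(\<lambda>n. (norm (unit_vec k n :: 'a))^2) = (\<lambda>n. if n = k then 1 else 0)"
    by (auto simp: unit_vec_def)
  then have "(\<lambda>n. (norm (unit_vec k n :: 'a))^2) sums 1"
    using sums_single[of k "\<lambda>_. 1::real"] by simp
  then show "(unit_vec k :: nat \<Rightarrow> 'a) \<in> l2" "l2norm (unit_vec k :: nat \<Rightarrow> 'a) = 1"
    by (auto simp: l2_def l2norm_def sums_iff)
qed

lemma l2_diff:
  assumes "x \<in> l2" "y \<in> l2"
  shows "(\<lambda>n. x n - y n :: 'a::real_normed_field) \<in> l2"
proof -
  have "(norm (x n - y n))^2 \<le> 2 * (norm (x n))^2 + 2 * (norm (y n))^2" for n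
  proof -
    have "(norm (x n - y n))^2 \<le> (norm (x n) + norm (y n))^2"
      by (intro power_mono norm_triangle_ineq4) simp
    also have "\<dots> \<le> 2 * (norm (x n))^2 + 2 * (norm (y n))^2"
      using zero_le_power2[of "norm (x n) - norm (y n)"] by (simp add: power2_eq_square algebra_simps)
    finally show ?thesis .
  qed
  moreover have "summable (\<lambda>n. 2 * (norm (x n))^2 + 2 * (norm (y n))^2)"
    using assms by (intro summable_add summable_mult) (auto simp: l2_def)
  ultimately show ?thesis
    unfolding l2_def by (auto intro: summable_comparison_test')
qed

lemma sum_norm_square_le_l2norm_square:
  assumes "x \<in> l2" "finite F"
  shows "(\<Sum>n\<in>F. (norm (x n :: 'a::real_normed_field))^2) \<le> l2norm x ^ 2"
  unfolding l2norm_square[OF assms(1)] using assms by (intro sum_le_suminf) (auto simp: l2_def)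

lemma norm_le_l2norm:
  assumes "x \<in> l2"
  shows "norm (x k :: 'a::real_normed_field) \<le> l2norm x"
proof -
  have "(norm (x k))^2 \<le> l2norm x ^ 2"
    using sum_norm_square_le_l2norm_square[OF assms, of "{k}"] by simp
  then show ?thesis
    using l2norm_nonneg[OF assms] by (rule power2_le_imp_le)
qed

definition diag_op :: "real \<Rightarrow> (nat \<Rightarrow> 'a::real_normed_field) \<Rightarrow> 'a \<times> 'a" where
  "diag_op c x = (x 0, of_real c * x 1)"

lemma l22norm_diag_op:
  "l22norm (diag_op c x) = sqrt ((norm (x 0))^2 + c^2 * (norm (x 1))^2)"
  by (simp add: diag_op_def l22norm_def norm_mult power_mult_distrib)

lemma l22norm_diag_op_le:
  assumes "\<bar>c\<bar> \<le> 1" "x \<in> l2"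
  shows "l22norm (diag_op c x) \<le> l2norm x"
proof -
  have "c^2 * (norm (x 1))^2 \<le> (norm (x 1))^2"
    using assms(1) by (intro mult_left_le_one_le) (auto simp: abs_square_le_1)
  moreover have "(norm (x 0))^2 + (norm (x 1))^2 \<le> l2norm x ^ 2"
    using sum_norm_square_le_l2norm_square[OF assms(2), of "{0, 1}"] by simp
  ultimately show ?thesis
    unfolding l22norm_diag_op using l2norm_nonneg[OF assms(2)] by (intro real_le_lsqrt) auto
qed

lemma is_bounded_op_diag_op:
  assumes "\<bar>c\<bar> \<le> 1"
  shows "is_bounded_op (diag_op c :: (nat \<Rightarrow> 'a::real_normed_field) \<Rightarrow> _)"
  unfolding is_bounded_op_def
proof (intro conjI ballI allI)
  show "\<exists>C. \<forall>x\<in>l2. l22norm (diag_op c x :: 'a \<times> 'a) \<le> C * l2norm x"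
    using l22norm_diag_op_le[OF assms] by (intro exI[of _ 1]) auto
qed (auto simp: diag_op_def algebra_simps)

lemma op_norm_diag_op:
  assumes "\<bar>c\<bar> \<le> 1"
  shows "op_norm (diag_op c :: (nat \<Rightarrow> 'a::real_normed_field) \<Rightarrow> _) = 1"
  unfolding op_norm_def
proof (rule cSup_eq_maximum)
  have "l22norm (diag_op c (unit_vec 0 :: nat \<Rightarrow> 'a)) = 1"
    by (simp add: l22norm_diag_op unit_vec_def)
  then show "1 \<in> {l22norm (diag_op c x :: 'a \<times> 'a) |x. x \<in> l2 \<and> l2norm x \<le> 1}"
    using unit_vec_in_l2[of 0, where 'a='a] l2norm_unit_vec[of 0, where 'a='a] by force
qed (use l22norm_diag_op_le[OF assms] in force)

text \<open>Only the first two coordinates enter \<open>T\<^sub>c\<close>, and \<open>c\<^sup>2 < 1\<close> penalises the second one.\<close>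

lemma diag_op_norming_point_coord1:
  assumes "\<bar>c\<bar> < 1" "x \<in> l2" "l2norm x = 1" "l22norm (diag_op c x) = 1"
  shows "x 1 = (0 :: 'a::real_normed_field)"
proof -
  have "(norm (x 0))^2 + c^2 * (norm (x 1))^2 = 1"
    using assms(4) unfolding l22norm_diag_op by simp
  moreover have "(norm (x 0))^2 + (norm (x 1))^2 \<le> 1"
    using sum_norm_square_le_l2norm_square[OF assms(2), of "{0, 1}"] assms(3) by simp
  ultimately have "(1 - c^2) * (norm (x 1))^2 \<le> 0"
    by (simp add: algebra_simps)
  moreover have "c^2 < 1"
    using assms(1) by (simp add: abs_square_less_1)
  ultimately show ?thesis
    by (simp add: mult_le_0_iff)
qed

lemma not_uniform_sBPBp_l2_l22: "\<not> uniform_sBPBp_l2_l22 TYPE('a::real_normed_field)"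
proof
  assume "uniform_sBPBp_l2_l22 TYPE('a)"
  then obtain \<eta> where "\<eta> > 0" and sBPBp: "\<And>(T :: (nat \<Rightarrow> 'a) \<Rightarrow> 'a \<times> 'a) x0.
       \<lbrakk>is_bounded_op T; op_norm T = 1; x0 \<in> l2; l2norm x0 = 1; l22norm (T x0) > 1 - \<eta>\<rbrakk> \<Longrightarrow>
       \<exists>x1\<in>l2. l2norm x1 = 1 \<and> l22norm (T x1) = 1 \<and> l2norm (\<lambda>n. x1 n - x0 n) < 1"
    unfolding uniform_sBPBp_l2_l22_def by (meson zero_less_one)
  define c where "c = 1 - min (\<eta>/2) (1/2)"
  have c: "0 \<le> c" "\<bar>c\<bar> < 1" "c > 1 - \<eta>"
    using \<open>\<eta> > 0\<close> by (auto simp: c_def)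
  have "l22norm (diag_op c (unit_vec 1 :: nat \<Rightarrow> 'a)) = c"
    using c by (simp add: l22norm_diag_op unit_vec_def)
  then obtain x1 :: "nat \<Rightarrow> 'a" where x1: "x1 \<in> l2" "l2norm x1 = 1"
      "l22norm (diag_op c x1) = 1" and close: "l2norm (\<lambda>n. x1 n - unit_vec 1 n) < 1"
    using sBPBp[of "diag_op c" "unit_vec 1"] c is_bounded_op_diag_op op_norm_diag_op
      unit_vec_in_l2 l2norm_unit_vec by (metis less_imp_le)
  have "x1 1 = 0"
    using diag_op_norming_point_coord1[OF c(2) x1] .
  then have "1 \<le> l2norm (\<lambda>n. x1 n - unit_vec 1 n)"
    using norm_le_l2norm[OF l2_diff[OF x1(1) unit_vec_in_l2[of 1]], of 1] by (simp add: unit_vec_def)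
  with close show False by simp
qed

theorem mainTheorem16:
  shows "\<not> uniform_sBPBp_l2_l22 TYPE(real) \<and> \<not> uniform_sBPBp_l2_l22 TYPE(complex)"
  using not_uniform_sBPBp_l2_l22[where 'a=real] not_uniform_sBPBp_l2_l22[where 'a=complex] by blast

end
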